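(* For $I=1,2$ let $x_I\in\mathbb{R}$, $z_I\in\mathbb{C}$ with $z_2\neq0$, let $\vec r_I=(z_I+\bar z_I,\,-i(z_I-\bar z_I),\,x_I)\in\mathbb{R}^3$, $r_I=|\vec r_I|$, and define $$F=\frac{r_1^2r_2^2-(\vec r_1\cdot\vec r_2)^2}{2r_2|z_2|^2}+\frac{r_2(z_1\bar z_2-z_2\bar z_1)^2}{|z_2|^4},$$ regarded as a function of the independent real variables $x_1,x_2$ and complex variables $z_1,z_2$. Let $K=F-x_1\frac{\partial F}{\partial x_1}-x_2\frac{\partial F}{\partial x_2}$ (equivalently, $K=F-x_1(u_1+\bar u_1)-x_2(u_2+\bar u_2)$ with $\partial F/\partial x_I=u_I+\bar u_I$). Then $$K=-\frac{2\,|\vec r_1\times\vec r_2|^2}{r_2^3}.$$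
   Context: $F$ is the closed-form (residue) evaluation of the generalized Legendre transform function $\frac{1}{2\pi i}\oint\frac{d\zeta}{\zeta}\frac{(\eta_1^{(2)})^2}{\eta_2^{(2)}}$ for the ${\cal O}(2)$ multiplets $\eta^{(2)}_I=\frac{\bar z_I}{\zeta}+x_I-z_I\zeta$; $K$ is the resulting hyperkähler potential of the associated 8-dimensional Swann bundle. *)

theory Defs
  imports "HOL-Analysis.Analysis"
begin

definition rvec :: "complex \<Rightarrow> real \<Rightarrow> real^3" where
  "rvec z x = vector [Re (z + cnj z), Re (- \<i> * (z - cnj z)), x]"

text \<open>The term (z1 cnj z2 - z2 cnj z1)^2 is real
  (it equals -4 (Im (z1 cnj z2))^2), so we take its real part.\<close>
definition Ffun :: "real \<Rightarrow> real \<Rightarrow> complex \<Rightarrow> complex \<Rightarrow> real" where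
  "Ffun x1 x2 z1 z2 =
     ((norm (rvec z1 x1))^2 * (norm (rvec z2 x2))^2 - (rvec z1 x1 \<bullet> rvec z2 x2)^2)
       / (2 * norm (rvec z2 x2) * (cmod z2)^2)
     + norm (rvec z2 x2) * Re ((z1 * cnj z2 - z2 * cnj z1)^2) / (cmod z2)^4"

definition Kfun :: "real \<Rightarrow> real \<Rightarrow> complex \<Rightarrow> complex \<Rightarrow> real" where
  "Kfun x1 x2 z1 z2 =
     Ffun x1 x2 z1 z2
     - x1 * deriv (\<lambda>t. Ffun t x2 z1 z2) x1
     - x2 * deriv (\<lambda>t. Ffun x1 t z1 z2) x2"

end

theory Submission
  imports Defs
begin

text \<open>
  With \<open>\<^bold>r\<^sub>I = (u\<^sub>I, x\<^sub>I)\<close>, \<open>u\<^sub>I \<in> \<real>\<^sup>2\<close>, Lagrange's identity turns \<open>F\<close> into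
  \<open>2 Q / (C r\<^sub>2) - 4 r\<^sub>2 W\<^sup>2 / C\<^sup>2\<close> with \<open>Q = |\<^bold>r\<^sub>1 \<times> \<^bold>r\<^sub>2|\<^sup>2\<close>, \<open>C = |u\<^sub>2|\<^sup>2 = 4|z\<^sub>2|\<^sup>2\<close>,
  \<open>W = u\<^sub>1 \<times> u\<^sub>2\<close> and \<open>r\<^sub>2 = \<surd>(C + x\<^sub>2\<^sup>2)\<close>. Since \<open>Q - W\<^sup>2\<close> is a quadratic form in
  \<open>(x\<^sub>1, x\<^sub>2)\<close>, Euler's relation gives \<open>x\<^sub>1 \<partial>\<^sub>1Q + x\<^sub>2 \<partial>\<^sub>2Q = 2 (Q - W\<^sup>2)\<close>, and this together
  with \<open>\<partial>\<^sub>2 r\<^sub>2 = x\<^sub>2 / r\<^sub>2\<close> and \<open>r\<^sub>2\<^sup>2 - x\<^sub>2\<^sup>2 = C\<close> collapses the Legendre combination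
  \<open>F - x\<^sub>1 \<partial>\<^sub>1F - x\<^sub>2 \<partial>\<^sub>2F\<close> to \<open>-2 Q / r\<^sub>2\<^sup>3\<close>.
\<close>

definition cross_norm_sq :: "real \<Rightarrow> real \<Rightarrow> real \<Rightarrow> real \<Rightarrow> real \<Rightarrow> real \<Rightarrow> real" where
  "cross_norm_sq u1 u2 x1 v1 v2 x2 =
     (u2 * x2 - x1 * v2)\<^sup>2 + (x1 * v1 - u1 * x2)\<^sup>2 + (u1 * v2 - u2 * v1)\<^sup>2"

definition swann_F :: "real \<Rightarrow> real \<Rightarrow> real \<Rightarrow> real \<Rightarrow> real \<Rightarrow> real \<Rightarrow> real" where
  "swann_F u1 u2 v1 v2 x1 x2 =
     2 * cross_norm_sq u1 u2 x1 v1 v2 x2 / ((v1\<^sup>2 + v2\<^sup>2) * sqrt (v1\<^sup>2 + v2\<^sup>2 + x2\<^sup>2))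
     - 4 * sqrt (v1\<^sup>2 + v2\<^sup>2 + x2\<^sup>2) * (u1 * v2 - u2 * v1)\<^sup>2 / (v1\<^sup>2 + v2\<^sup>2)\<^sup>2"

lemma norm_cross3_vector_sq:
  "(norm (cross3 (vector [u1, u2, x1]) (vector [v1, v2, x2])))\<^sup>2 = cross_norm_sq u1 u2 x1 v1 v2 x2"
  unfolding power2_norm_eq_inner cross_norm_sq_def by (simp add: cross3_simps power2_eq_square)

lemma rvec_eq_vector: "rvec z x = vector [2 * Re z, 2 * Im z, x]"
  by (simp add: rvec_def)

lemma norm_vector_3: "norm (vector [a, b, c] :: real^3) = sqrt (a\<^sup>2 + b\<^sup>2 + c\<^sup>2)"
  unfolding norm_eq_sqrt_inner by (simp add: inner_vec_def sum_3 vector_def power2_eq_square)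

lemma Ffun_eq_swann_F:
  "Ffun x1 x2 z1 z2 = swann_F (2 * Re z1) (2 * Im z1) (2 * Re z2) (2 * Im z2) x1 x2"
proof -
  define r1 where "r1 = rvec z1 x1"
  define r2 where "r2 = rvec z2 x2"
  define C where "C = (2 * Re z2)\<^sup>2 + (2 * Im z2)\<^sup>2"
  define W where "W = 2 * Re z1 * (2 * Im z2) - 2 * Im z1 * (2 * Re z2)"
  have lagrange: "(norm r1)\<^sup>2 * (norm r2)\<^sup>2 - (r1 \<bullet> r2)\<^sup>2 = (norm (cross3 r1 r2))\<^sup>2"
    using norm_cross_dot[of r1 r2] by (simp add: power_mult_distrib)
  have cmod_sq: "(cmod z2)\<^sup>2 = C / 4"
    by (simp add: C_def cmod_power2 power_mult_distrib)
  have cmod_4: "(cmod z2) ^ 4 = (C / 4)\<^sup>2"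
    by (simp flip: cmod_sq)
  have re_sq: "Re ((z1 * cnj z2 - z2 * cnj z1)\<^sup>2) = - W\<^sup>2 / 4"
    by (simp add: W_def power2_eq_square algebra_simps)
  have "Ffun x1 x2 z1 z2 = (norm (cross3 r1 r2))\<^sup>2 / (2 * norm r2 * (C / 4))
      + norm r2 * (- W\<^sup>2 / 4) / (C / 4)\<^sup>2"
    unfolding Ffun_def r1_def[symmetric] r2_def[symmetric] lagrange cmod_sq cmod_4 re_sq ..
  also have "\<dots> = 2 * (norm (cross3 r1 r2))\<^sup>2 / (C * norm r2) - 4 * norm r2 * W\<^sup>2 / C\<^sup>2"
    by (simp add: power_divide algebra_simps)
  finally show ?thesis
    unfolding swann_F_def r1_def r2_def rvec_eq_vector norm_cross3_vector_sq norm_vector_3 C_def W_def .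
qed

lemma cross_norm_sq_has_derivative_x1:
  "((\<lambda>t. cross_norm_sq u1 u2 t v1 v2 x2) has_real_derivative
     2 * (v1 * (x1 * v1 - u1 * x2) - v2 * (u2 * x2 - x1 * v2))) (at x1)"
  unfolding cross_norm_sq_def by (auto intro!: derivative_eq_intros simp: algebra_simps)

lemma cross_norm_sq_has_derivative_x2:
  "((\<lambda>t. cross_norm_sq u1 u2 x1 v1 v2 t) has_real_derivative
     2 * (u2 * (u2 * x2 - x1 * v2) - u1 * (x1 * v1 - u1 * x2))) (at x2)"
  unfolding cross_norm_sq_def by (auto intro!: derivative_eq_intros simp: algebra_simps)

lemma cross_norm_sq_euler:
  "x1 * (2 * (v1 * (x1 * v1 - u1 * x2) - v2 * (u2 * x2 - x1 * v2)))
   + x2 * (2 * (u2 * (u2 * x2 - x1 * v2) - u1 * (x1 * v1 - u1 * x2)))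
   = 2 * (cross_norm_sq u1 u2 x1 v1 v2 x2 - (u1 * v2 - u2 * v1)\<^sup>2)"
  by (simp add: cross_norm_sq_def power2_eq_square algebra_simps)

lemma sqrt_const_plus_square_has_derivative:
  fixes C :: real
  assumes "C > 0"
  shows "((\<lambda>t. sqrt (C + t\<^sup>2)) has_real_derivative x / sqrt (C + x\<^sup>2)) (at x)"
proof -
  have "C + x\<^sup>2 > 0"
    using assms by (simp add: add_pos_nonneg)
  then show ?thesis
    by (auto intro!: derivative_eq_intros simp: field_simps)
qed

lemma legendre_combination:
  fixes C r Q Q1 Q2 V x1 x2 :: real
  assumes "C > 0" and r: "r = sqrt (C + x2\<^sup>2)" and euler: "x1 * Q1 + x2 * Q2 = 2 * (Q - V)"
  shows "2 * Q / (C * r) - 4 * r * V / C\<^sup>2 - x1 * (2 * Q1 / (C * r))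
           - x2 * (2 * Q2 / (C * r) - 2 * Q * x2 / (C * r ^ 3) - 4 * x2 * V / (C\<^sup>2 * r))
         = - 2 * Q / r ^ 3"
proof -
  have "C + x2\<^sup>2 > 0"
    using assms(1) by (simp add: add_pos_nonneg)
  then have "r > 0" and r_sq: "r\<^sup>2 = C + x2\<^sup>2"
    using r by simp_all
  have "x1 * Q1 = 2 * (Q - V) - x2 * Q2"
    using euler by simp
  then show ?thesis
    using \<open>r > 0\<close> \<open>C > 0\<close> r_sq by (simp add: field_simps) algebra
qed

lemma swann_F_has_derivative_x1:
  assumes "C = v1\<^sup>2 + v2\<^sup>2" and "C > 0" and "r = sqrt (C + x2\<^sup>2)"
  shows "((\<lambda>t. swann_F u1 u2 v1 v2 t x2) has_real_derivative
     2 * (2 * (v1 * (x1 * v1 - u1 * x2) - v2 * (u2 * x2 - x1 * v2))) / (C * r)) (at x1)"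
proof -
  have "r > 0"
    using assms(2,3) by (simp add: add_pos_nonneg)
  then show ?thesis
    unfolding swann_F_def assms(1)[symmetric] assms(3)[symmetric]
    using \<open>C > 0\<close> by (auto intro!: derivative_eq_intros cross_norm_sq_has_derivative_x1)
qed

lemma swann_F_has_derivative_x2:
  assumes C: "C = v1\<^sup>2 + v2\<^sup>2" and "C > 0" and r: "r = sqrt (C + x2\<^sup>2)"
    and Q: "Q = cross_norm_sq u1 u2 x1 v1 v2 x2" and V: "V = (u1 * v2 - u2 * v1)\<^sup>2"
  shows "((\<lambda>t. swann_F u1 u2 v1 v2 x1 t) has_real_derivative
     2 * (2 * (u2 * (u2 * x2 - x1 * v2) - u1 * (x1 * v1 - u1 * x2))) / (C * r)
     - 2 * Q * x2 / (C * r ^ 3) - 4 * x2 * V / (C\<^sup>2 * r)) (at x2)"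
proof -
  define R where "R t = sqrt (C + t\<^sup>2)" for t
  have "C + x2\<^sup>2 > 0"
    using \<open>C > 0\<close> by (simp add: add_pos_nonneg)
  then have "r > 0" and "r\<^sup>2 = C + x2\<^sup>2"
    using r by simp_all
  have R_deriv: "(R has_real_derivative x2 / r) (at x2)"
    unfolding R_def r by (rule sqrt_const_plus_square_has_derivative[OF \<open>C > 0\<close>])
  have F_eq: "swann_F u1 u2 v1 v2 x1 =
      (\<lambda>t. 2 * cross_norm_sq u1 u2 x1 v1 v2 t / (C * R t) - 4 * R t * V / C\<^sup>2)"
    unfolding swann_F_def C R_def V ..
  have "R x2 = r"
    unfolding R_def r ..
  then show ?thesis
    unfolding F_eq using \<open>r > 0\<close> \<open>C > 0\<close> \<open>r\<^sup>2 = C + x2\<^sup>2\<close>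
    by (auto intro!: derivative_eq_intros cross_norm_sq_has_derivative_x2 R_deriv
        simp: Q field_simps power3_eq_cube)
qed

theorem mainTheorem3:
  fixes x1 x2 :: real and z1 z2 :: complex
  assumes "z2 \<noteq> 0"
  shows "(\<lambda>t. Ffun t x2 z1 z2) differentiable (at x1)
    \<and> (\<lambda>t. Ffun x1 t z1 z2) differentiable (at x2)
    \<and> Kfun x1 x2 z1 z2 =
      - 2 * (norm (cross3 (rvec z1 x1) (rvec z2 x2)))^2 / (norm (rvec z2 x2))^3"
proof -
  define u1 u2 v1 v2 where "u1 = 2 * Re z1" "u2 = 2 * Im z1" "v1 = 2 * Re z2" "v2 = 2 * Im z2"
  define C where "C = v1\<^sup>2 + v2\<^sup>2"
  define r where "r = sqrt (C + x2\<^sup>2)"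
  define Q where "Q = cross_norm_sq u1 u2 x1 v1 v2 x2"
  have "C = 4 * (cmod z2)\<^sup>2"
    by (simp add: C_def u1_u2_v1_v2_def cmod_power2 power_mult_distrib)
  then have "C > 0"
    using assms by simp
  have F: "Ffun x1' x2' z1 z2 = swann_F u1 u2 v1 v2 x1' x2'" for x1' x2'
    unfolding Ffun_eq_swann_F u1_u2_v1_v2_def ..
  note D1 = swann_F_has_derivative_x1[OF C_def \<open>C > 0\<close> r_def]
  note D2 = swann_F_has_derivative_x2[OF C_def \<open>C > 0\<close> r_def Q_def refl]
  have "swann_F u1 u2 v1 v2 x1 x2 = 2 * Q / (C * r) - 4 * r * (u1 * v2 - u2 * v1)\<^sup>2 / C\<^sup>2"
    unfolding swann_F_def Q_def r_def C_def ..
  then have "Kfun x1 x2 z1 z2 = - 2 * Q / r ^ 3"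
    unfolding Kfun_def F DERIV_imp_deriv[OF D1] DERIV_imp_deriv[OF D2]
    using legendre_combination[OF \<open>C > 0\<close> r_def cross_norm_sq_euler] by (simp add: Q_def)
  moreover have "norm (rvec z2 x2) = r" and "(norm (cross3 (rvec z1 x1) (rvec z2 x2)))\<^sup>2 = Q"
    by (simp_all add: rvec_eq_vector norm_vector_3 norm_cross3_vector_sq r_def C_def Q_def u1_u2_v1_v2_def)
  ultimately show ?thesis
    using D1 D2 by (auto simp: F real_differentiable_def)
qed

end
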